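(* Let $(\mathcal{Y},\eta)$ be an $(n,m)$-voltage operator with $\mathcal{Y}$ connected, let $y_0$ be a flag of $\mathcal{Y}$, $L=\operatorname{Stab}_{\mathcal{C}^m}(y_0)$, $\zeta:L\to\mathcal{C}^n$, $\zeta(\omega)=\eta(W_\omega(y_0))$, and for $\upsilon\in\mathcal{C}^m$ let $\mathcal{Z}_\upsilon=\mathcal{C}^n/\zeta(L\cap L^\upsilon)$. Then the number of distinct premaniplexes in $\{\mathcal{Z}_\upsilon:\upsilon\in\mathcal{C}^m\}$ is at most the number of orbits of $\operatorname{Aut}(\mathcal{Y})$ on the flags of $\mathcal{Y}$.
   Context: An $m$-premaniplex is an edge-coloured graph (semi-edges and parallel edges allowed) with colours $\{0,\dots,m-1\}$ such that every vertex (flag) is the start of exactly one dart of each colour, and for $|i-j|\ge2$ alternating $i,j$-paths of length 4 are closed; $y^i$ is the $i$-adjacent flag. $\mathcal{C}^m=\langle r_0,\dots,r_{m-1}\mid r_i^2,\ (r_ir_j)^2\ (|i-j|\ge2)\rangle$ acts on the left on flags by $r_iy=y^i$; automorphisms act on the right. $L^\upsilon=\upsilon^{-1}L\upsilon$. For a subgroup $K\le\mathcal{C}^n$, $\mathcal{C}^n/K$ is the $n$-premaniplex with flags the left cosets $\omega K$ and $(\omega K)^i=r_i\omega K$. For a flag $y$ and $\omega\in\mathcal{C}^m$, $W_\omega(y)$ is the homotopy class of paths from $y$ whose colour sequence $i_1,\dots,i_k$ satisfies $r_{i_k}\cdots r_{i_1}=\omega$; these form the fundamental groupoid $\Pi(\mathcal{Y})$.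 A voltage assignment $\eta:\Pi(\mathcal{Y})\to\mathcal{C}^n$ satisfies $\eta(W_1W_2)=\eta(W_2)\eta(W_1)$; $(\mathcal{Y},\eta)$ is then an $(n,m)$-voltage operator. *)

theory Defs
  imports Main
begin

text \<open>A word [a1,...,ak] over colours {..<m} represents r_a1 r_a2 ... r_ak.
  cxrel m is the congruence on words generated by r_i^2 = 1 and
  (r_i r_j)^2 = 1 for |i-j| >= 2.\<close>

inductive cxrel :: "nat \<Rightarrow> nat list \<Rightarrow> nat list \<Rightarrow> bool" for m :: nat where
  cx_refl: "set w \<subseteq> {..<m} \<Longrightarrow> cxrel m w w"
| cx_del: "set u \<subseteq> {..<m} \<Longrightarrow> set v \<subseteq> {..<m} \<Longrightarrow> i < m \<Longrightarrow>
            cxrel m (u @ [i, i] @ v) (u @ v)"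
| cx_comm: "set u \<subseteq> {..<m} \<Longrightarrow> set v \<subseteq> {..<m} \<Longrightarrow> i < m \<Longrightarrow> j < m \<Longrightarrow>
            i + 2 \<le> j \<or> j + 2 \<le> i \<Longrightarrow> cxrel m (u @ [i, j] @ v) (u @ [j, i] @ v)"
| cx_sym: "cxrel m u v \<Longrightarrow> cxrel m v u"
| cx_trans: "cxrel m u v \<Longrightarrow> cxrel m v w \<Longrightarrow> cxrel m u w"

definition cls :: "nat \<Rightarrow> nat list \<Rightarrow> nat list set" where
  "cls m w = {v. cxrel m w v}"

definition Cox :: "nat \<Rightarrow> nat list set set" where
  "Cox m = cls m ` {w. set w \<subseteq> {..<m}}"

definition cmul :: "nat \<Rightarrow> nat list set \<Rightarrow> nat list set \<Rightarrow> nat list set" where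
  "cmul m a b = {w. \<exists>u\<in>a. \<exists>v\<in>b. cxrel m (u @ v) w}"

definition cinv :: "nat \<Rightarrow> nat list set \<Rightarrow> nat list set" where
  "cinv m a = {w. \<exists>u\<in>a. cxrel m (rev u) w}"

definition gen :: "nat \<Rightarrow> nat \<Rightarrow> nat list set" where
  "gen m i = cls m [i]"

definition conjg :: "nat \<Rightarrow> nat list set set \<Rightarrow> nat list set \<Rightarrow> nat list set set" where
  "conjg m L v = (\<lambda>w. cmul m (cinv m v) (cmul m w v)) ` L"

text \<open>An m-premaniplex is given by a flag set F and the adjacency maps
  adj i y = y^i (i < m).\<close>
definition premaniplex :: "nat \<Rightarrow> 'a set \<Rightarrow> (nat \<Rightarrow> 'a \<Rightarrow> 'a) \<Rightarrow> bool" where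
  "premaniplex m F adj \<longleftrightarrow>
     (\<forall>i<m. \<forall>y\<in>F. adj i y \<in> F \<and> adj i (adj i y) = y) \<and>
     (\<forall>i<m. \<forall>j<m. i + 2 \<le> j \<or> j + 2 \<le> i \<longrightarrow>
        (\<forall>y\<in>F. adj i (adj j (adj i (adj j y))) = y))"

text \<open>Action of a word: r_a1 ... r_ak y (r_ak applied first).\<close>
definition wact :: "(nat \<Rightarrow> 'a \<Rightarrow> 'a) \<Rightarrow> nat list \<Rightarrow> 'a \<Rightarrow> 'a" where
  "wact adj w y = foldr adj w y"

text \<open>Left action of C^m on flags (well defined on premaniplexes).\<close>
definition cact :: "(nat \<Rightarrow> 'a \<Rightarrow> 'a) \<Rightarrow> nat list set \<Rightarrow> 'a \<Rightarrow> 'a" where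
  "cact adj \<omega> y = wact adj (SOME w. w \<in> \<omega>) y"

definition connected_pm :: "nat \<Rightarrow> 'a set \<Rightarrow> (nat \<Rightarrow> 'a \<Rightarrow> 'a) \<Rightarrow> bool" where
  "connected_pm m F adj \<longleftrightarrow>
     (\<forall>y\<in>F. \<forall>z\<in>F. \<exists>w. set w \<subseteq> {..<m} \<and> wact adj w y = z)"

definition pm_aut :: "nat \<Rightarrow> 'a set \<Rightarrow> (nat \<Rightarrow> 'a \<Rightarrow> 'a) \<Rightarrow> ('a \<Rightarrow> 'a) set" where
  "pm_aut m F adj = {\<phi>. bij_betw \<phi> F F \<and> (\<forall>i<m. \<forall>y\<in>F. \<phi> (adj i y) = adj i (\<phi> y))}"

definition aut_orbits :: "nat \<Rightarrow> 'a set \<Rightarrow> (nat \<Rightarrow> 'a \<Rightarrow> 'a) \<Rightarrow> 'a set set" where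
  "aut_orbits m F adj = (\<lambda>y. (\<lambda>\<phi>. \<phi> y) ` pm_aut m F adj) ` F"

definition stab :: "nat \<Rightarrow> (nat \<Rightarrow> 'a \<Rightarrow> 'a) \<Rightarrow> 'a \<Rightarrow> nat list set set" where
  "stab m adj y0 = {\<omega> \<in> Cox m. cact adj \<omega> y0 = y0}"

text \<open>Since in a premaniplex the homotopy classes of paths starting at y are
  exactly the W_\<omega>(y), \<omega> \<in> C^m, a voltage assignment on the fundamental
  groupoid is a map eta y \<omega> = eta(W_\<omega>(y)) in C^n with
  eta(W_\<omega>(y) W_\<tau>(\<omega> y)) = eta(W_\<tau>(\<omega> y)) eta(W_\<omega>(y)), where
  W_\<omega>(y) W_\<tau>(\<omega> y) = W_{\<tau>\<omega>}(y).\<close>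
definition voltage_operator ::
  "nat \<Rightarrow> nat \<Rightarrow> 'a set \<Rightarrow> (nat \<Rightarrow> 'a \<Rightarrow> 'a) \<Rightarrow> ('a \<Rightarrow> nat list set \<Rightarrow> nat list set) \<Rightarrow> bool" where
  "voltage_operator n m F adj \<eta> \<longleftrightarrow> premaniplex m F adj \<and>
     (\<forall>y\<in>F. \<forall>\<omega>\<in>Cox m. \<eta> y \<omega> \<in> Cox n) \<and>
     (\<forall>y\<in>F. \<forall>\<omega>\<in>Cox m. \<forall>\<tau>\<in>Cox m.
        \<eta> y (cmul m \<tau> \<omega>) = cmul n (\<eta> (cact adj \<omega> y) \<tau>) (\<eta> y \<omega>))"

definition lcoset :: "nat \<Rightarrow> nat list set \<Rightarrow> nat list set set \<Rightarrow> nat list set set" where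
  "lcoset n \<omega> K = (\<lambda>k. cmul n \<omega> k) ` K"

text \<open>C^n/K as (flag set, adjacency): flags are the cosets \<omega>K, and
  (\<omega>K)^i = r_i \<omega> K.\<close>
definition coset_pm :: "nat \<Rightarrow> nat list set set \<Rightarrow>
    nat list set set set \<times> (nat \<Rightarrow> nat list set set \<Rightarrow> nat list set set)" where
  "coset_pm n K = ((\<lambda>\<omega>. lcoset n \<omega> K) ` Cox n, (\<lambda>i C. cmul n (gen n i) ` C))"

end

theory Submission
  imports Defs
begin

text \<open>Conjugation moves stabilisers along the action,
  \<open>L\<^sup>\<upsilon> = Stab(\<upsilon>\<^sup>-\<^sup>1 y\<^sub>0)\<close>, and flags in the same \<open>Aut(\<Y>)\<close>-orbit have the same
  stabiliser, because automorphisms commute with the action of \<open>C\<^sup>m\<close>. Hence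
  \<open>\<Z>\<^sub>\<upsilon> = C\<^sup>n/\<zeta>(L \<inter> Stab(\<upsilon>\<^sup>-\<^sup>1 y\<^sub>0))\<close> depends only on the orbit of \<open>\<upsilon>\<^sup>-\<^sup>1 y\<^sub>0\<close>, so
  choosing one such orbit for each premaniplex \<open>\<Z>\<^sub>\<upsilon>\<close> is injective.\<close>

abbreviation valid :: "nat \<Rightarrow> nat list \<Rightarrow> bool" where
  "valid m w \<equiv> set w \<subseteq> {..<m}"

lemma cxrel_valid: "cxrel m u v \<Longrightarrow> valid m u \<and> valid m v"
  by (induction rule: cxrel.induct) auto

lemma cxrel_append_right: "cxrel m u v \<Longrightarrow> valid m w \<Longrightarrow> cxrel m (u @ w) (v @ w)"
proof (induction rule: cxrel.induct)
  case (cx_refl w') then show ?case by (simp add: cxrel.cx_refl)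
next
  case (cx_del u v i) then show ?case using cxrel.cx_del[of u m "v @ w" i] by auto
next
  case (cx_comm u v i j) then show ?case using cxrel.cx_comm[of u m "v @ w" i j] by auto
next
  case cx_sym then show ?case by (blast intro: cxrel.cx_sym)
next
  case cx_trans then show ?case by (blast intro: cxrel.cx_trans)
qed

lemma cxrel_append_left: "cxrel m u v \<Longrightarrow> valid m w \<Longrightarrow> cxrel m (w @ u) (w @ v)"
proof (induction rule: cxrel.induct)
  case (cx_refl w') then show ?case by (simp add: cxrel.cx_refl)
next
  case (cx_del u v i) then show ?case using cxrel.cx_del[of "w @ u" m v i] by auto
next
  case (cx_comm u v i j) then show ?case using cxrel.cx_comm[of "w @ u" m v i j] by auto
next
  case cx_sym then show ?case by (blast intro: cxrel.cx_sym)
next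
  case cx_trans then show ?case by (blast intro: cxrel.cx_trans)
qed

lemma cxrel_rev: "cxrel m u v \<Longrightarrow> cxrel m (rev u) (rev v)"
proof (induction rule: cxrel.induct)
  case (cx_refl w) then show ?case by (simp add: cxrel.cx_refl)
next
  case (cx_del u v i) then show ?case using cxrel.cx_del[of "rev v" m "rev u" i] by auto
next
  case (cx_comm u v i j) then show ?case
    using cxrel.cx_sym[OF cxrel.cx_comm[of "rev v" m "rev u" i j]] by auto
next
  case cx_sym then show ?case by (blast intro: cxrel.cx_sym)
next
  case cx_trans then show ?case by (blast intro: cxrel.cx_trans)
qed

lemma cxrel_cancel_rev:
  "valid m u \<Longrightarrow> valid m p \<Longrightarrow> valid m v \<Longrightarrow> cxrel m (u @ rev p @ p @ v) (u @ v)"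
proof (induction p arbitrary: v)
  case Nil then show ?case by (simp add: cxrel.cx_refl)
next
  case (Cons a p)
  have "cxrel m ((u @ rev p) @ [a, a] @ (p @ v)) ((u @ rev p) @ (p @ v))"
    using Cons.prems by (intro cxrel.cx_del) auto
  with Cons show ?case by (auto intro: cxrel.cx_trans)
qed

lemma cls_eq: "cxrel m a b \<Longrightarrow> cls m a = cls m b"
  unfolding cls_def by (auto intro: cxrel.cx_sym cxrel.cx_trans)

lemma mem_cls_self: "valid m w \<Longrightarrow> w \<in> cls m w"
  unfolding cls_def by (simp add: cxrel.cx_refl)

lemma cmul_cls:
  assumes "valid m a" "valid m b"
  shows "cmul m (cls m a) (cls m b) = cls m (a @ b)"
proof
  show "cmul m (cls m a) (cls m b) \<subseteq> cls m (a @ b)"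
  proof
    fix w assume "w \<in> cmul m (cls m a) (cls m b)"
    then obtain u v where u: "cxrel m a u" and v: "cxrel m b v" and w: "cxrel m (u @ v) w"
      unfolding cmul_def cls_def by auto
    have "cxrel m (a @ b) (u @ b)" using cxrel_append_right[OF u assms(2)] .
    moreover have "cxrel m (u @ b) (u @ v)" using cxrel_append_left[OF v] cxrel_valid[OF u] by auto
    ultimately show "w \<in> cls m (a @ b)" using w unfolding cls_def by (auto intro: cxrel.cx_trans)
  qed
  show "cls m (a @ b) \<subseteq> cmul m (cls m a) (cls m b)"
    using assms unfolding cmul_def cls_def by (auto intro: cxrel.cx_refl)
qed

lemma cinv_cls: "cinv m (cls m a) = cls m (rev a)"
proof -
  have "cxrel m (rev a) w \<longleftrightarrow> (\<exists>u. cxrel m a u \<and> cxrel m (rev u) w)" for w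
    using cxrel_rev cxrel.cx_trans cxrel.cx_refl by (metis rev_rev_ident cxrel_valid)
  then show ?thesis unfolding cinv_def cls_def by auto
qed

lemma conj_cls:
  assumes "valid m w" "valid m p"
  shows "cmul m (cinv m (cls m p)) (cmul m (cls m w) (cls m p)) = cls m (rev p @ w @ p)"
  using assms by (simp add: cinv_cls cmul_cls)

lemma wact_Nil [simp]: "wact adj [] y = y"
  and wact_Cons [simp]: "wact adj (a # u) y = adj a (wact adj u y)"
  and wact_append [simp]: "wact adj (u @ v) y = wact adj u (wact adj v y)"
  unfolding wact_def by simp_all

context
  fixes m :: nat and F :: "'a set" and adj :: "nat \<Rightarrow> 'a \<Rightarrow> 'a"
  assumes pm: "premaniplex m F adj"
begin

lemma adj_closed: "i < m \<Longrightarrow> y \<in> F \<Longrightarrow> adj i y \<in> F"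
  using pm unfolding premaniplex_def by blast

lemma adj_adj: "i < m \<Longrightarrow> y \<in> F \<Longrightarrow> adj i (adj i y) = y"
  using pm unfolding premaniplex_def by blast

lemma adj_commute:
  assumes "i < m" "j < m" "i + 2 \<le> j \<or> j + 2 \<le> i" "y \<in> F"
  shows "adj i (adj j y) = adj j (adj i y)"
proof -
  have y': "adj j (adj i y) \<in> F" using assms by (simp add: adj_closed)
  have "adj i (adj j (adj i (adj j (adj j (adj i y))))) = adj j (adj i y)"
    using pm y' assms(1-3) unfolding premaniplex_def by blast
  then show ?thesis using assms by (simp add: adj_adj adj_closed)
qed

lemma wact_closed: "valid m w \<Longrightarrow> y \<in> F \<Longrightarrow> wact adj w y \<in> F"
  by (induction w) (auto simp: adj_closed)

lemma wact_rev_inverse: "valid m p \<Longrightarrow> y \<in> F \<Longrightarrow> wact adj p (wact adj (rev p) y) = y"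
proof (induction p arbitrary: y)
  case (Cons a p)
  then have "adj a y \<in> F" by (simp add: adj_closed)
  with Cons show ?case by (simp add: adj_adj)
qed simp

lemma wact_cxrel: "cxrel m u v \<Longrightarrow> y \<in> F \<Longrightarrow> wact adj u y = wact adj v y"
proof (induction rule: cxrel.induct)
  case (cx_del u v i)
  then show ?case by (simp add: adj_adj wact_closed)
next
  case (cx_comm u v i j)
  then have "adj i (adj j (wact adj v y)) = adj j (adj i (wact adj v y))"
    by (intro adj_commute) (auto simp: wact_closed)
  then show ?case by simp
qed simp_all

lemma cact_cls: "valid m w \<Longrightarrow> y \<in> F \<Longrightarrow> cact adj (cls m w) y = wact adj w y"
  unfolding cact_def
  by (metis cls_def mem_Collect_eq mem_cls_self someI wact_cxrel)

lemma stab_eq: "y \<in> F \<Longrightarrow> stab m adj y = cls m ` {x. valid m x \<and> wact adj x y = y}"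
  unfolding stab_def Cox_def by (auto simp: cact_cls)

lemma stab_conjg:
  assumes "y \<in> F" "valid m p"
  shows "conjg m (stab m adj y) (cls m p) = stab m adj (wact adj (rev p) y)"
proof -
  define z where "z = wact adj (rev p) y"
  have z: "z \<in> F" unfolding z_def using assms by (simp add: wact_closed)
  have pz: "wact adj p z = y" unfolding z_def using assms by (simp add: wact_rev_inverse)
  have "conjg m (stab m adj y) (cls m p) = stab m adj z"
  proof
    show "conjg m (stab m adj y) (cls m p) \<subseteq> stab m adj z"
    proof
      fix c assume "c \<in> conjg m (stab m adj y) (cls m p)"
      then obtain w where w: "valid m w" "wact adj w y = y"
        and "c = cmul m (cinv m (cls m p)) (cmul m (cls m w) (cls m p))"
        unfolding conjg_def stab_eq[OF assms(1)] by blast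
      then have c: "c = cls m (rev p @ w @ p)" using assms(2) by (simp add: conj_cls)
      have "wact adj (rev p @ w @ p) z = z" using pz w(2) z_def by simp
      moreover have "valid m (rev p @ w @ p)" using w(1) assms(2) by simp
      ultimately show "c \<in> stab m adj z" unfolding c stab_eq[OF z] by blast
    qed
    show "stab m adj z \<subseteq> conjg m (stab m adj y) (cls m p)"
    proof
      fix c assume "c \<in> stab m adj z"
      then obtain x where x: "valid m x" "wact adj x z = z" and c: "c = cls m x"
        unfolding stab_eq[OF z] by blast
      define w where "w = p @ x @ rev p"
      have "wact adj w y = wact adj p (wact adj x z)" unfolding w_def z_def by simp
      then have w: "valid m w" "wact adj w y = y"
        unfolding w_def using x assms(2) pz by auto
      have "cxrel m ([] @ rev p @ p @ (x @ rev p @ p)) ([] @ x @ rev p @ p)"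
        using x(1) assms(2) by (intro cxrel_cancel_rev) auto
      moreover have "cxrel m (x @ rev p @ p @ []) (x @ [])"
        using x(1) assms(2) by (intro cxrel_cancel_rev) auto
      ultimately have "cxrel m (rev p @ w @ p) x"
        unfolding w_def by (auto intro: cxrel.cx_trans)
      then have "c = cmul m (cinv m (cls m p)) (cmul m (cls m w) (cls m p))"
        using c w(1) assms(2) by (simp add: conj_cls cls_eq)
      moreover have "cls m w \<in> stab m adj y" unfolding stab_eq[OF assms(1)] using w by blast
      ultimately show "c \<in> conjg m (stab m adj y) (cls m p)" unfolding conjg_def by blast
    qed
  qed
  then show ?thesis unfolding z_def .
qed

lemma aut_wact:
  assumes "\<phi> \<in> pm_aut m F adj" "valid m w" "y \<in> F"
  shows "\<phi> (wact adj w y) = wact adj w (\<phi> y)"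
  using assms(2)
proof (induction w)
  case (Cons a w)
  then show ?case using assms(1,3) wact_closed unfolding pm_aut_def by auto
qed simp

lemma stab_aut:
  assumes "\<phi> \<in> pm_aut m F adj" "y \<in> F"
  shows "stab m adj (\<phi> y) = stab m adj y"
proof -
  have inj: "inj_on \<phi> F" and \<phi>y: "\<phi> y \<in> F"
    using assms unfolding pm_aut_def bij_betw_def by auto
  have "wact adj x (\<phi> y) = \<phi> y \<longleftrightarrow> wact adj x y = y" if "valid m x" for x
    using that assms aut_wact wact_closed inj_on_eq_iff[OF inj] by metis
  then show ?thesis unfolding stab_eq[OF assms(2)] stab_eq[OF \<phi>y] by auto
qed

lemma stab_eq_on_aut_orbit:
  assumes "Orb \<in> aut_orbits m F adj" "y \<in> Orb" "z \<in> Orb"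
  shows "stab m adj y = stab m adj z"
  using assms unfolding aut_orbits_def by (auto simp: stab_aut)

end

lemma id_pm_aut: "id \<in> pm_aut m F adj"
  unfolding pm_aut_def by auto

theorem lemma5p8:
  fixes n m :: nat and F :: "'a set" and adj :: "nat \<Rightarrow> 'a \<Rightarrow> 'a"
    and \<eta> :: "'a \<Rightarrow> nat list set \<Rightarrow> nat list set" and y0 :: 'a
  assumes "voltage_operator n m F adj \<eta>"
    and "connected_pm m F adj"
    and "y0 \<in> F"
  defines "L \<equiv> stab m adj y0"
  defines "\<zeta> \<equiv> \<eta> y0"
  defines "Z \<equiv> (\<lambda>\<upsilon>. coset_pm n (\<zeta> ` (L \<inter> conjg m L \<upsilon>)))"
  shows "\<exists>f. inj_on f (Z ` Cox m) \<and> f ` (Z ` Cox m) \<subseteq> aut_orbits m F adj"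
proof -
  have pm: "premaniplex m F adj" using assms(1) unfolding voltage_operator_def by auto
  define Z_orb where "Z_orb Orb = coset_pm n (\<zeta> ` (L \<inter> stab m adj (SOME z. z \<in> Orb)))" for Orb
  have cover: "Z ` Cox m \<subseteq> Z_orb ` aut_orbits m F adj"
  proof
    fix X assume "X \<in> Z ` Cox m"
    then obtain p where p: "valid m p" and X: "X = Z (cls m p)" unfolding Cox_def by auto
    define z where "z = wact adj (rev p) y0"
    define Orb where "Orb = (\<lambda>\<phi>. \<phi> z) ` pm_aut m F adj"
    have "z \<in> F" unfolding z_def using pm p assms(3) by (simp add: wact_closed)
    then have Orb: "Orb \<in> aut_orbits m F adj" unfolding Orb_def aut_orbits_def by blast
    have "z \<in> Orb" unfolding Orb_def using id_pm_aut by (metis id_apply image_eqI)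
    then have "stab m adj (SOME z. z \<in> Orb) = stab m adj z"
      using stab_eq_on_aut_orbit[OF pm Orb] by (metis someI)
    then have "X = Z_orb Orb"
      unfolding X Z_def Z_orb_def L_def z_def stab_conjg[OF pm assms(3) p] by simp
    with Orb show "X \<in> Z_orb ` aut_orbits m F adj" by blast
  qed
  then have "inj_on (inv_into (aut_orbits m F adj) Z_orb) (Z ` Cox m)"
    by (rule inj_on_inv_into)
  moreover have "inv_into (aut_orbits m F adj) Z_orb ` Z ` Cox m \<subseteq> aut_orbits m F adj"
    using cover by (blast intro: inv_into_into)
  ultimately show ?thesis by blast
qed

end
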